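(* Let $k,d$ be positive integers and let $0\le r\le k-1$ with $d\equiv r\pmod k$. There exists $n_0=n_0(d,k)$ such that for every $n\ge n_0$ and every $\mathcal{A}\subset 2^{[n]}$ with $\mathrm{VC}(\triangle\mathcal{A}^k)\le d$, we have $|\mathcal{A}|\le 2^r\binom{n-r}{\le\lfloor d/k\rfloor}$.
   Context: $[n]=\{1,\dots,n\}$. For $Y\subset[n]$, $Y$ is shattered by $\mathcal{F}\subset 2^{[n]}$ if $\{S\cap Y: S\in\mathcal{F}\}=2^Y$; $\mathrm{VC}(\mathcal{F})$ is the largest cardinality of a set shattered by $\mathcal{F}$. $\triangle\mathcal{A}^k=\{S_1\triangle\cdots\triangle S_k: S_i\in\mathcal{A}\ \forall i\in[k]\}$ (the $S_i$ need not be distinct), where $\triangle$ is symmetric difference. $\binom{m}{\le t}=\sum_{j=0}^{t}\binom{m}{j}$. *)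

theory Defs
  imports Main
begin

definition shatters :: "nat set set \<Rightarrow> nat set \<Rightarrow> bool" where
  "shatters F Y \<longleftrightarrow> (\<lambda>S. S \<inter> Y) ` F = Pow Y"

definition VC :: "nat \<Rightarrow> nat set set \<Rightarrow> nat" where
  "VC n F = Max {card Y | Y. Y \<subseteq> {1..n} \<and> shatters F Y}"

text \<open>k-fold symmetric difference family (defined for k >= 1).\<close>
fun symdiff_pow :: "nat set set \<Rightarrow> nat \<Rightarrow> nat set set" where
  "symdiff_pow A 0 = {{}}"
| "symdiff_pow A (Suc 0) = A"
| "symdiff_pow A (Suc (Suc k)) =
     {S \<union> T - S \<inter> T | S T. S \<in> A \<and> T \<in> symdiff_pow A (Suc k)}"

definition binom_le :: "nat \<Rightarrow> nat \<Rightarrow> nat" where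
  "binom_le m t = (\<Sum>j=0..t. m choose j)"

end

(*
  Down-compression keeps the size of A and commutes with symmetric differences up to
  inclusion, so it never creates new shattered sets of the k-fold symmetric difference family;
  hence A may be assumed down-closed. For a down-closed family the union of any k members is
  shattered, so all such unions have at most d = k q + r points.

  A maximal collection of pairwise disjoint (q+1)-sets of A then has fewer than k members, and
  their union X is a set of bounded size meeting every member of A in all but at most q points.
  Call a trace B \<subseteq> X rich if its link {C. C \<inter> X = {} \<and> B \<union> C \<in> A} contains many pairwise
  disjoint q-sets. The rich traces again form a down-closed family whose k-fold unions have at
  most r points, so they all lie in a set of r points. If that set is itself a rich trace R,
  every member of A has at most q points outside R, which gives the bound directly. Otherwise
  there are fewer than 2^r rich traces, each poor trace has a link of order n^(q-1), and for
  large n these lower order terms are absorbed.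
*)

theory Submission
  imports Defs "HOL-Library.Disjoint_Sets" "HOL.Binomial_Plus"
begin

section \<open>Down-compression\<close>

definition compress :: "'a \<Rightarrow> 'a set set \<Rightarrow> 'a set \<Rightarrow> 'a set" where
  "compress i F S = (if i \<in> S \<and> S - {i} \<notin> F then S - {i} else S)"

definition compression :: "'a \<Rightarrow> 'a set set \<Rightarrow> 'a set set" where
  "compression i F = compress i F ` F"

lemma compress_subset: "compress i F S \<subseteq> S"
  by (simp add: compress_def)

lemma mem_compression_iff:
  "T \<in> compression i F \<longleftrightarrow>
     (i \<notin> T \<and> (T \<in> F \<or> insert i T \<in> F)) \<or> (i \<in> T \<and> T \<in> F \<and> T - {i} \<in> F)"
proof
  assume "T \<in> compression i F"
  then show "(i \<notin> T \<and> (T \<in> F \<or> insert i T \<in> F)) \<or> (i \<in> T \<and> T \<in> F \<and> T - {i} \<in> F)"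
    by (auto simp: compression_def compress_def insert_absorb split: if_splits)
next
  assume "(i \<notin> T \<and> (T \<in> F \<or> insert i T \<in> F)) \<or> (i \<in> T \<and> T \<in> F \<and> T - {i} \<in> F)"
  then consider "T \<in> F" "compress i F T = T" | "insert i T \<in> F" "compress i F (insert i T) = T"
    by (cases "T \<in> F") (auto simp: compress_def Diff_insert_absorb)
  then show "T \<in> compression i F"
    unfolding compression_def by cases (metis image_eqI)+
qed

lemma inj_on_compress: "inj_on (compress i F) F"
  by (auto simp: inj_on_def compress_def split: if_splits)

lemma card_compression: "finite F \<Longrightarrow> card (compression i F) = card F"
  unfolding compression_def by (rule card_image[OF inj_on_compress])

lemma compression_subset_Pow:
  assumes "F \<subseteq> Pow N"
  shows "compression i F \<subseteq> Pow N"
proof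
  fix T assume "T \<in> compression i F"
  then obtain S where "S \<in> F" "T = compress i F S"
    unfolding compression_def by blast
  with assms compress_subset[of i F S] show "T \<in> Pow N" by blast
qed

lemma sum_card_compression_less:
  assumes "finite F" and "\<And>S. S \<in> F \<Longrightarrow> finite S"
    and "S \<in> F" and "i \<in> S" and "S - {i} \<notin> F"
  shows "(\<Sum>T\<in>compression i F. card T) < (\<Sum>T\<in>F. card T)"
proof -
  have "(\<Sum>T\<in>compression i F. card T) = (\<Sum>T\<in>F. card (compress i F T))"
    unfolding compression_def by (rule sum.reindex[OF inj_on_compress, unfolded comp_def])
  also have "\<dots> < (\<Sum>T\<in>F. card T)"
  proof (rule sum_strict_mono_ex1[OF \<open>finite F\<close>])
    show "\<forall>T\<in>F. card (compress i F T) \<le> card T"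
      using assms(2) by (simp add: card_mono compress_subset)
    have "compress i F S = S - {i}"
      using assms(4,5) by (simp add: compress_def)
    then show "\<exists>T\<in>F. card (compress i F T) < card T"
      using assms(2-4) by (metis card_Diff1_less)
  qed
  finally show ?thesis .
qed

definition symdiff_fam :: "'a set set \<Rightarrow> 'a set set \<Rightarrow> 'a set set" where
  "symdiff_fam A B = {S \<union> T - S \<inter> T | S T. S \<in> A \<and> T \<in> B}"

lemma symdiff_famI: "S \<in> A \<Longrightarrow> T \<in> B \<Longrightarrow> S \<union> T - S \<inter> T \<in> symdiff_fam A B"
  unfolding symdiff_fam_def by blast

lemma symdiff_fam_mono: "A \<subseteq> A' \<Longrightarrow> B \<subseteq> B' \<Longrightarrow> symdiff_fam A B \<subseteq> symdiff_fam A' B'"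
  unfolding symdiff_fam_def by blast

lemma symdiff_pow_Suc_Suc:
  "symdiff_pow A (Suc (Suc k)) = symdiff_fam A (symdiff_pow A (Suc k))"
  unfolding symdiff_fam_def by (rule symdiff_pow.simps(3))

lemma symdiff_fam_commute: "symdiff_fam A B = symdiff_fam B A"
  unfolding symdiff_fam_def by blast

lemma symdiff_compression_mixed:
  assumes x: "x \<in> compression i A" and y: "y \<in> compression i B" and "i \<in> x" and "i \<notin> y"
  shows "x \<union> y - x \<inter> y \<in> symdiff_fam A B \<and> (x \<union> y - x \<inter> y) - {i} \<in> symdiff_fam A B"
proof -
  let ?z = "x \<union> y - x \<inter> y"
  have xA: "x \<in> A" "x - {i} \<in> A"
    using x \<open>i \<in> x\<close> unfolding mem_compression_iff by auto
  from y \<open>i \<notin> y\<close> consider "y \<in> B" | "insert i y \<in> B"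
    unfolding mem_compression_iff by auto
  then show ?thesis
  proof cases
    case 1
    have "?z - {i} = (x - {i}) \<union> y - (x - {i}) \<inter> y"
      using assms(3,4) by auto
    then show ?thesis
      using symdiff_famI[OF xA(1) 1] symdiff_famI[OF xA(2) 1] by simp
  next
    case 2
    have "?z = (x - {i}) \<union> insert i y - (x - {i}) \<inter> insert i y"
      and "?z - {i} = x \<union> insert i y - x \<inter> insert i y"
      using assms(3,4) by auto
    then show ?thesis
      using symdiff_famI[OF xA(2) 2] symdiff_famI[OF xA(1) 2] by simp
  qed
qed

lemma symdiff_compression_outside:
  assumes x: "x \<in> compression i A" and y: "y \<in> compression i B" and "i \<notin> x" and "i \<notin> y"
  shows "x \<union> y - x \<inter> y \<in> symdiff_fam A B \<or> insert i (x \<union> y - x \<inter> y) \<in> symdiff_fam A B"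
  using x y assms(3,4) unfolding mem_compression_iff
proof (elim disjE conjE)
  assume "x \<in> A" "y \<in> B"
  then show ?thesis using symdiff_famI by blast
next
  assume "x \<in> A" "insert i y \<in> B"
  moreover have "insert i (x \<union> y - x \<inter> y) = x \<union> insert i y - x \<inter> insert i y"
    using assms(3,4) by auto
  ultimately show ?thesis using symdiff_famI by metis
next
  assume "insert i x \<in> A" "y \<in> B"
  moreover have "insert i (x \<union> y - x \<inter> y) = insert i x \<union> y - insert i x \<inter> y"
    using assms(3,4) by auto
  ultimately show ?thesis using symdiff_famI by metis
next
  assume "insert i x \<in> A" "insert i y \<in> B"
  moreover have "x \<union> y - x \<inter> y = insert i x \<union> insert i y - insert i x \<inter> insert i y"
    using assms(3,4) by auto
  ultimately show ?thesis using symdiff_famI by metis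
qed simp_all

lemma symdiff_fam_compression:
  "symdiff_fam (compression i A) (compression i B) \<subseteq> compression i (symdiff_fam A B)"
proof
  fix z assume "z \<in> symdiff_fam (compression i A) (compression i B)"
  then obtain x y where x: "x \<in> compression i A" and y: "y \<in> compression i B"
    and z: "z = x \<union> y - x \<inter> y"
    unfolding symdiff_fam_def by auto
  let ?AB = "symdiff_fam A B"
  consider "i \<in> x" "i \<in> y" | "i \<in> x" "i \<notin> y" | "i \<notin> x" "i \<in> y" | "i \<notin> x" "i \<notin> y"
    by blast
  then show "z \<in> compression i ?AB"
  proof cases
    case 1
    then have "z \<in> ?AB" and "i \<notin> z"
      using x y z symdiff_famI unfolding mem_compression_iff by auto
    then show ?thesis unfolding mem_compression_iff by blast
  next
    case 2
    then have "i \<in> z" using z by blast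
    then show ?thesis
      using symdiff_compression_mixed[OF x y 2] z unfolding mem_compression_iff by blast
  next
    case 3
    then have "i \<in> z" and "z = y \<union> x - y \<inter> x" using z by blast+
    then show ?thesis
      using symdiff_compression_mixed[OF y x 3(2,1)] symdiff_fam_commute[of B A]
      unfolding mem_compression_iff by simp
  next
    case 4
    have "z \<in> ?AB \<or> insert i z \<in> ?AB"
      using symdiff_compression_outside[OF x y 4] z by simp
    moreover have "i \<notin> z" using z 4 by blast
    ultimately show ?thesis unfolding mem_compression_iff by blast
  qed
qed

lemma symdiff_pow_compression:
  "symdiff_pow (compression i A) (Suc k) \<subseteq> compression i (symdiff_pow A (Suc k))"
proof (induction k)
  case 0
  show ?case by simp
next
  case (Suc k)
  have "symdiff_pow (compression i A) (Suc (Suc k))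
          \<subseteq> symdiff_fam (compression i A) (compression i (symdiff_pow A (Suc k)))"
    unfolding symdiff_pow_Suc_Suc by (rule symdiff_fam_mono[OF order_refl Suc])
  also have "\<dots> \<subseteq> compression i (symdiff_pow A (Suc (Suc k)))"
    unfolding symdiff_pow_Suc_Suc by (rule symdiff_fam_compression)
  finally show ?case .
qed

lemma shatters_iff_Pow_subset: "shatters F Y \<longleftrightarrow> Pow Y \<subseteq> (\<lambda>S. S \<inter> Y) ` F"
  unfolding shatters_def by blast

lemma shatters_mono: "F \<subseteq> F' \<Longrightarrow> shatters F Y \<Longrightarrow> shatters F' Y"
  unfolding shatters_iff_Pow_subset by blast

lemma shatters_compressionD:
  assumes "shatters (compression i F) Y"
  shows "shatters F Y"
  unfolding shatters_iff_Pow_subset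
proof
  fix W assume W: "W \<in> Pow Y"
  have trace: "\<exists>T\<in>compression i F. T \<inter> Y = V" if "V \<subseteq> Y" for V
    using assms that unfolding shatters_iff_Pow_subset by auto
  show "W \<in> (\<lambda>S. S \<inter> Y) ` F"
  proof (cases "i \<in> Y")
    case False
    obtain T where "T \<in> compression i F" "T \<inter> Y = W"
      using trace W by auto
    then show ?thesis
      using False unfolding mem_compression_iff by (metis Int_insert_left image_eqI)
  next
    case True
    obtain T where T: "T \<in> compression i F" "T \<inter> Y = insert i W"
      using trace[of "insert i W"] W True by auto
    then have "T \<in> F" "T - {i} \<in> F"
      unfolding mem_compression_iff by auto
    moreover have "W = T \<inter> Y \<or> W = (T - {i}) \<inter> Y"
      using T(2) by auto
    ultimately show ?thesis by auto
  qed
qed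

definition down_closed :: "'a set set \<Rightarrow> bool" where
  "down_closed F \<longleftrightarrow> (\<forall>S\<in>F. \<forall>T. T \<subseteq> S \<longrightarrow> T \<in> F)"

lemma down_closedD: "down_closed F \<Longrightarrow> S \<in> F \<Longrightarrow> T \<subseteq> S \<Longrightarrow> T \<in> F"
  unfolding down_closed_def by blast

lemma down_closedI_remove:
  assumes remove: "\<And>S i. S \<in> F \<Longrightarrow> i \<in> S \<Longrightarrow> S - {i} \<in> F"
    and fin: "\<And>S. S \<in> F \<Longrightarrow> finite S"
  shows "down_closed F"
proof -
  have diff: "S - D \<in> F" if "S \<in> F" "finite D" for S D
    using that(2)
  proof (induction D)
    case (insert x D)
    have "S - insert x D = S - D - {x}" by blast
    then show ?case
      using remove[of "S - D" x] insert.IH by (cases "x \<in> S - D") simp_all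
  qed (use that in simp)
  show ?thesis
    unfolding down_closed_def
  proof (intro ballI allI impI)
    fix S T assume "S \<in> F" "T \<subseteq> S"
    then have "T = S - (S - T)" by blast
    with diff[OF \<open>S \<in> F\<close>] fin[OF \<open>S \<in> F\<close>] show "T \<in> F" by (metis finite_Diff)
  qed
qed

text \<open>A family of minimal total size among those with the same size and no new shattered sets
  is down-closed, since otherwise a compression would decrease its total size.\<close>

lemma exists_down_closed_family:
  assumes "A \<subseteq> Pow N" and "finite N" and "0 < k"
  shows "\<exists>B\<subseteq>Pow N. card B = card A \<and> down_closed B \<and>
           (\<forall>Y. shatters (symdiff_pow B k) Y \<longrightarrow> shatters (symdiff_pow A k) Y)"
proof -
  define P where "P B \<longleftrightarrow> B \<subseteq> Pow N \<and> card B = card A \<and>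
           (\<forall>Y. shatters (symdiff_pow B k) Y \<longrightarrow> shatters (symdiff_pow A k) Y)" for B
  have "P A" unfolding P_def using assms(1) by blast
  then obtain B where PB: "P B"
    and min: "\<And>B'. P B' \<Longrightarrow> (\<Sum>T\<in>B. card T) \<le> (\<Sum>T\<in>B'. card T)"
    using ex_has_least_nat[of P A "\<lambda>B. \<Sum>T\<in>B. card T"] by blast
  have BN: "B \<subseteq> Pow N" using PB by (simp add: P_def)
  have finB: "finite B"
    using BN assms(2) by (meson finite_Pow_iff rev_finite_subset)
  have fin: "\<And>S. S \<in> B \<Longrightarrow> finite S"
    using BN assms(2) by (meson PowD rev_finite_subset subsetD)
  have "S - {i} \<in> B" if S: "S \<in> B" "i \<in> S" for S i
  proof (rule ccontr)
    assume "S - {i} \<notin> B"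
    obtain m where k: "k = Suc m" using \<open>0 < k\<close> not0_implies_Suc by blast
    have "P (compression i B)"
      unfolding P_def
    proof (intro conjI allI impI)
      show "compression i B \<subseteq> Pow N" by (rule compression_subset_Pow[OF BN])
      show "card (compression i B) = card A"
        using card_compression[OF finB] PB by (simp add: P_def)
      fix Y assume "shatters (symdiff_pow (compression i B) k) Y"
      then have "shatters (compression i (symdiff_pow B k)) Y"
        using shatters_mono symdiff_pow_compression k by metis
      then show "shatters (symdiff_pow A k) Y"
        using PB shatters_compressionD unfolding P_def by blast
    qed
    with min sum_card_compression_less[OF finB fin S \<open>S - {i} \<notin> B\<close>] show False
      by (meson not_le)
  qed
  then have "down_closed B" using down_closedI_remove fin by blast
  then show ?thesis using PB unfolding P_def by blast
qed

section \<open>Shattering by down-closed families\<close>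

lemma Union_mem_symdiff_pow:
  assumes "\<And>i. i < Suc m \<Longrightarrow> h i \<in> B" and "disjoint_family_on h {..<Suc m}"
  shows "(\<Union>i<Suc m. h i) \<in> symdiff_pow B (Suc m)"
  using assms
proof (induction m)
  case 0
  then show ?case by (simp add: lessThan_Suc)
next
  case (Suc m)
  let ?U = "\<Union>i<Suc m. h i"
  have "?U \<in> symdiff_pow B (Suc m)"
    using Suc.IH Suc.prems disjoint_family_on_mono[of "{..<Suc m}" "{..<Suc (Suc m)}" h] by simp
  moreover have "h (Suc m) \<inter> ?U = {}"
  proof -
    have "h (Suc m) \<inter> h i = {}" if "i < Suc m" for i
      using Suc.prems(2) that unfolding disjoint_family_on_def by simp
    then show ?thesis by blast
  qed
  moreover have "(\<Union>i<Suc (Suc m). h i) = h (Suc m) \<union> ?U"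
    by (simp add: lessThan_Suc)
  ultimately show ?case
    unfolding symdiff_pow_Suc_Suc using symdiff_famI[of "h (Suc m)" B] Suc.prems(1)
    by (metis Diff_empty lessI)
qed

text \<open>Any subset of a union of \<open>k\<close> members is the symmetric difference of the disjoint pieces
  it cuts out of them, and these pieces lie in the family because it is down-closed.\<close>

lemma shatters_symdiff_pow_Union:
  assumes "down_closed B" and "0 < k" and "\<And>i. i < k \<Longrightarrow> g i \<in> B"
  shows "shatters (symdiff_pow B k) (\<Union>i<k. g i)"
  unfolding shatters_iff_Pow_subset
proof
  fix W assume W: "W \<in> Pow (\<Union>i<k. g i)"
  define h where "h i = disjointed g i \<inter> W" for i
  obtain m where k: "k = Suc m" using \<open>0 < k\<close> not0_implies_Suc by blast
  have "h i \<in> B" if "i < k" for i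
    using down_closedD[OF assms(1) assms(3)[OF that]] disjointed_subset[of g i]
    unfolding h_def by blast
  moreover have "disjoint_family_on h {..<k}"
    using disjoint_family_disjointed[of g]
    unfolding h_def disjoint_family_on_def by blast
  ultimately have "(\<Union>i<k. h i) \<in> symdiff_pow B k"
    using Union_mem_symdiff_pow k by blast
  moreover have "(\<Union>i<k. h i) = W"
    using W finite_UN_disjointed_eq[of g k] unfolding h_def lessThan_atLeast0 by blast
  ultimately show "W \<in> (\<lambda>S. S \<inter> (\<Union>i<k. g i)) ` symdiff_pow B k"
    using W by (metis Int_absorb2 PowD image_eqI)
qed

lemma card_le_VC:
  assumes "Y \<subseteq> {1..n}" and "shatters F Y"
  shows "card Y \<le> VC n F"
proof -
  have "finite {card Y | Y. Y \<subseteq> {1..n} \<and> shatters F Y}"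
    by (rule finite_image_set) (rule finite_subset[of _ "Pow {1..n}"], auto)
  then show ?thesis
    unfolding VC_def using assms by (blast intro: Max_ge)
qed

section \<open>Disjoint subfamilies and counting\<close>

lemma card_le_two_power: "F \<subseteq> Pow V \<Longrightarrow> finite V \<Longrightarrow> card F \<le> 2 ^ card V"
  by (metis card_Pow card_mono finite_Pow_iff)

lemma exists_disjoint_member:
  assumes "pairwise disjnt M" and "finite U" and "card U < card M"
  shows "\<exists>C\<in>M. C \<inter> U = {}"
proof (rule ccontr)
  assume "\<not> (\<exists>C\<in>M. C \<inter> U = {})"
  then have "\<forall>C\<in>M. \<exists>x. x \<in> C \<inter> U" by blast
  then obtain c where c: "\<And>C. C \<in> M \<Longrightarrow> c C \<in> C \<inter> U" by metis
  have "inj_on c M"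
    using assms(1) c by (intro inj_onI) (metis IntE disjnt_iff pairwiseD)
  moreover have "c ` M \<subseteq> U" using c by blast
  ultimately have "card M \<le> card U" using assms(2) card_inj_on_le by blast
  with assms(3) show False by simp
qed

lemma exists_maximal_disjoint_subfamily:
  assumes "finite H" and "\<And>S. S \<in> H \<Longrightarrow> S \<noteq> {}"
    and "\<And>M. M \<subseteq> H \<Longrightarrow> pairwise disjnt M \<Longrightarrow> card M < K"
  shows "\<exists>M\<subseteq>H. pairwise disjnt M \<and> card M < K \<and> (\<forall>S\<in>H. S \<inter> \<Union>M \<noteq> {})"
proof -
  define P where "P M \<longleftrightarrow> M \<subseteq> H \<and> pairwise disjnt M" for M
  have "P {}" unfolding P_def by simp
  moreover have "\<forall>M. P M \<longrightarrow> card M < K" using assms(3) unfolding P_def by blast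
  ultimately obtain M where PM: "P M" and max: "\<And>M'. P M' \<Longrightarrow> card M' \<le> card M"
    using ex_has_greatest_nat[of P "{}" card K] by blast
  have "S \<inter> \<Union>M = {} \<Longrightarrow> False" if "S \<in> H" for S
  proof -
    assume empty: "S \<inter> \<Union>M = {}"
    have fin: "finite M" using PM assms(1) finite_subset unfolding P_def by blast
    have "S \<notin> M" using empty assms(2) that by blast
    moreover have "P (insert S M)"
      using PM that empty unfolding P_def pairwise_def disjnt_def by blast
    ultimately show False using max[of "insert S M"] fin by simp
  qed
  then show ?thesis using PM \<open>\<forall>M. P M \<longrightarrow> card M < K\<close> unfolding P_def by blast
qed

lemma disjoint_family_on_lessThan_Suc_upd:
  assumes "disjoint_family_on c {..<m}" and "C \<inter> (\<Union>j<m. c j) = {}"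
  shows "disjoint_family_on (c(m := C)) {..<Suc m}"
  unfolding disjoint_family_on_def
proof (intro ballI impI)
  fix i j assume "i \<in> {..<Suc m}" "j \<in> {..<Suc m}" "i \<noteq> j"
  then consider "i < m" "j < m" | "i = m" "j < m" | "i < m" "j = m"
    by fastforce
  then show "(c(m := C)) i \<inter> (c(m := C)) j = {}"
    using assms(2) disjoint_family_onD[OF assms(1), of i j] \<open>i \<noteq> j\<close> by cases auto
qed

text \<open>Greedy choice: the earlier picks and \<open>U\<close> have at most \<open>card U + m * q\<close> points, so they
  meet fewer members of the next disjoint family than it has.\<close>

lemma exists_disjoint_choice:
  assumes "finite U"
    and "\<And>i. i < m \<Longrightarrow> pairwise disjnt (M i)"
    and "\<And>i. i < m \<Longrightarrow> card U + m * q < card (M i)"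
    and "\<And>i C. i < m \<Longrightarrow> C \<in> M i \<Longrightarrow> finite C \<and> card C = q"
  shows "\<exists>c. (\<forall>i<m. c i \<in> M i \<and> c i \<inter> U = {}) \<and> disjoint_family_on c {..<m}"
  using assms(2-4)
proof (induction m)
  case 0
  then show ?case by (simp add: disjoint_family_on_def)
next
  case (Suc m)
  have "\<exists>c. (\<forall>i<m. c i \<in> M i \<and> c i \<inter> U = {}) \<and> disjoint_family_on c {..<m}"
  proof (rule Suc.IH)
    fix i assume "i < m"
    then show "pairwise disjnt (M i)" using Suc.prems(1) by simp
    have "card U + m * q \<le> card U + Suc m * q" by simp
    then show "card U + m * q < card (M i)" using Suc.prems(2)[of i] \<open>i < m\<close> by linarith
  next
    fix i C assume "i < m" "C \<in> M i"
    then show "finite C \<and> card C = q" using Suc.prems(3)[of i C] by simp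
  qed
  then obtain c where c: "\<forall>i<m. c i \<in> M i \<and> c i \<inter> U = {}" "disjoint_family_on c {..<m}"
    by blast
  have cq: "finite (c j) \<and> card (c j) = q" if "j < m" for j
    using c(1) Suc.prems(3)[of j "c j"] that by simp
  define U' where "U' = U \<union> (\<Union>j<m. c j)"
  have "card (\<Union>j<m. c j) \<le> (\<Sum>j<m. card (c j))" by (rule card_UN_le) simp
  also have "\<dots> = m * q" using cq by simp
  finally have "card U' \<le> card U + m * q"
    unfolding U'_def using card_Un_le[of U "\<Union>j<m. c j"] by linarith
  also have "\<dots> < card (M m)" using Suc.prems(2)[of m] by (simp add: add.assoc)
  moreover have "finite U'" unfolding U'_def using \<open>finite U\<close> cq by simp
  ultimately obtain C where C: "C \<in> M m" "C \<inter> U' = {}"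
    using exists_disjoint_member[OF Suc.prems(1)] by (meson le_less_trans lessI)
  have "(\<forall>i<Suc m. (c(m := C)) i \<in> M i \<and> (c(m := C)) i \<inter> U = {})"
    using c C unfolding U'_def by (auto simp: less_Suc_eq)
  moreover have "disjoint_family_on (c(m := C)) {..<Suc m}"
    using c(2) C(2) unfolding U'_def by (intro disjoint_family_on_lessThan_Suc_upd) auto
  ultimately show ?case by blast
qed

lemma card_subsets_card_le:
  assumes "finite Y"
  shows "card {C. C \<subseteq> Y \<and> card C \<le> q} = binom_le (card Y) q"
proof -
  have "{C. C \<subseteq> Y \<and> card C \<le> q} = (\<Union>j\<in>{0..q}. {C. C \<subseteq> Y \<and> card C = j})"
    by auto
  also have "card \<dots> = (\<Sum>j=0..q. card {C. C \<subseteq> Y \<and> card C = j})"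
    by (rule card_UN_disjoint) (use assms in auto)
  finally show ?thesis
    unfolding binom_le_def using n_subsets[OF assms] by simp
qed

lemma card_subsets_containing:
  assumes "finite N" and "0 < q"
  shows "card {S. S \<subseteq> N \<and> card S = q \<and> x \<in> S} \<le> card N choose (q - 1)"
proof -
  let ?A = "{S. S \<subseteq> N \<and> card S = q \<and> x \<in> S}"
  have "inj_on (\<lambda>S. S - {x}) ?A"
    by (rule inj_onI) (metis (no_types, lifting) insert_Diff mem_Collect_eq)
  moreover have "(\<lambda>S. S - {x}) ` ?A \<subseteq> {R. R \<subseteq> N \<and> card R = q - 1}"
  proof
    fix R assume "R \<in> (\<lambda>S. S - {x}) ` ?A"
    then obtain S where S: "S \<subseteq> N" "card S = q" "x \<in> S" "R = S - {x}" by blast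
    moreover have "finite S" using S(1) assms(1) by (rule finite_subset)
    ultimately show "R \<in> {R. R \<subseteq> N \<and> card R = q - 1}" by auto
  qed
  moreover have "finite {R. R \<subseteq> N \<and> card R = q - 1}" using assms(1) by simp
  ultimately have "card ?A \<le> card {R. R \<subseteq> N \<and> card R = q - 1}"
    using card_inj_on_le by blast
  then show ?thesis using n_subsets[OF assms(1)] by simp
qed

text \<open>A \<open>q\<close>-uniform family without \<open>K\<close> pairwise disjoint members is covered by the at most
  \<open>K * q\<close> points of a maximal disjoint subfamily.\<close>

lemma card_uniform_family_le:
  assumes "finite N" and "0 < q" and "H \<subseteq> {S. S \<subseteq> N \<and> card S = q}"
    and "\<And>M. M \<subseteq> H \<Longrightarrow> pairwise disjnt M \<Longrightarrow> card M < K"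
  shows "card H \<le> K * q * (card N choose (q - 1))"
proof -
  let ?star = "\<lambda>x. {S. S \<subseteq> N \<and> card S = q \<and> x \<in> S}"
  have "H \<subseteq> Pow N" using assms(3) by blast
  then have finH: "finite H" using assms(1) by (meson finite_Pow_iff finite_subset)
  have "S \<noteq> {}" if "S \<in> H" for S
    using that assms(2,3) by auto
  then obtain M where M: "M \<subseteq> H" "card M < K" "\<forall>S\<in>H. S \<inter> \<Union>M \<noteq> {}"
    using exists_maximal_disjoint_subfamily[OF finH _ assms(4)] by blast
  have "\<Union>M \<subseteq> N" using M(1) assms(3) by blast
  then have finT: "finite (\<Union>M)" using assms(1) by (rule finite_subset)
  have "card (\<Union>M) \<le> (\<Sum>C\<in>M. card C)" by (rule card_Union_le_sum_card)
  also have "\<dots> = card M * q" using M(1) assms(3) by (simp add: subset_iff)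
  also have "\<dots> \<le> K * q" using M(2) by simp
  finally have cardT: "card (\<Union>M) \<le> K * q" .
  have "H \<subseteq> (\<Union>x\<in>\<Union>M. ?star x)"
  proof
    fix S assume "S \<in> H"
    then obtain x where "x \<in> S" "x \<in> \<Union>M" using M(3) by blast
    then show "S \<in> (\<Union>x\<in>\<Union>M. ?star x)" using \<open>S \<in> H\<close> assms(3) by blast
  qed
  moreover have "finite (\<Union>x\<in>\<Union>M. ?star x)"
    by (rule finite_subset[of _ "Pow N"]) (use assms(1) in auto)
  ultimately have "card H \<le> card (\<Union>x\<in>\<Union>M. ?star x)"
    by (rule card_mono[rotated])
  also have "\<dots> \<le> (\<Sum>x\<in>\<Union>M. card (?star x))"
    by (rule card_UN_le[OF finT])
  also have "\<dots> \<le> (\<Sum>x\<in>\<Union>M. card N choose (q - 1))"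
    by (rule sum_mono) (rule card_subsets_containing[OF assms(1,2)])
  also have "\<dots> \<le> K * q * (card N choose (q - 1))"
    using cardT by simp
  finally show ?thesis .
qed

lemma card_UN_disjoint_uniform:
  assumes "disjoint_family_on c {..<m}" and "\<And>i. i < m \<Longrightarrow> finite (c i) \<and> card (c i) = q"
  shows "card (\<Union>i<m. c i) = m * q"
proof -
  have "card (\<Union>i<m. c i) = (\<Sum>i<m. card (c i))"
    using assms by (intro card_UN_disjoint) (auto simp: disjoint_family_on_def)
  also have "\<dots> = m * q"
    using assms(2) by simp
  finally show ?thesis .
qed

section \<open>Estimates for partial sums of binomial coefficients\<close>

lemma binom_le_Suc_Suc: "binom_le (Suc m) (Suc q) = binom_le m (Suc q) + binom_le m q"
proof -
  have "binom_le (Suc m) (Suc q) = (Suc m choose 0) + (\<Sum>j=0..q. Suc m choose Suc j)"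
    unfolding binom_le_def using sum.atLeast0_atMost_Suc_shift[of "\<lambda>j. Suc m choose j" q]
    by simp
  also have "\<dots> = binom_le m q + ((m choose 0) + (\<Sum>j=0..q. m choose Suc j))"
    unfolding binom_le_def by (simp add: sum.distrib)
  also have "(m choose 0) + (\<Sum>j=0..q. m choose Suc j) = binom_le m (Suc q)"
    unfolding binom_le_def using sum.atLeast0_atMost_Suc_shift[of "\<lambda>j. m choose j" q]
    by simp
  finally show ?thesis by simp
qed

lemma binom_le_mono: "m \<le> n \<Longrightarrow> binom_le m q \<le> binom_le n q"
  unfolding binom_le_def by (intro sum_mono binomial_right_mono)

lemma binom_le_Suc_le:
  assumes "m \<le> n"
  shows "binom_le n (Suc q) \<le> binom_le m (Suc q) + (n - m) * binom_le n q"
  using assms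
proof (induction n)
  case 0
  then show ?case by simp
next
  case (Suc n)
  show ?case
  proof (cases "m = Suc n")
    case False
    then have "m \<le> n" using Suc.prems by simp
    have "binom_le (Suc n) (Suc q) = binom_le n (Suc q) + binom_le n q"
      by (rule binom_le_Suc_Suc)
    also have "\<dots> \<le> binom_le m (Suc q) + (n - m) * binom_le n q + binom_le n q"
      using Suc.IH[OF \<open>m \<le> n\<close>] by simp
    also have "\<dots> \<le> binom_le m (Suc q) + (n - m) * binom_le (Suc n) q + binom_le (Suc n) q"
      using binom_le_mono[of n "Suc n" q] by (intro add_mono mult_left_mono) simp_all
    also have "\<dots> = binom_le m (Suc q) + (Suc n - m) * binom_le (Suc n) q"
      using \<open>m \<le> n\<close> by (simp add: Suc_diff_le)
    finally show ?thesis .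
  qed simp
qed

lemma choose_mult_le_choose_Suc:
  assumes "Suc j * M \<le> n - j"
  shows "(n choose j) * M \<le> n choose Suc j"
proof -
  have "Suc j * ((n choose j) * M) = (Suc j * M) * (n choose j)"
    by (simp only: mult_ac)
  also have "\<dots> \<le> (n - j) * (n choose j)"
    using assms by (rule mult_right_mono) simp
  also have "\<dots> = Suc j * (n choose Suc j)"
    using binomial_absorption[of j n] binomial_absorb_comp[of n j] by simp
  finally show ?thesis
    using mult_le_cancel1[of "Suc j"] by simp

qed

lemma binom_le_pred_le_choose:
  assumes "0 < q" and "2 * q + C * q * q \<le> n"
  shows "C * binom_le n (q - 1) \<le> n choose q"
proof -
  have "binom_le n (q - 1) \<le> (\<Sum>j=0..q-1. n choose (q - 1))"
    unfolding binom_le_def using assms by (intro sum_mono binomial_mono) auto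
  also have "\<dots> = q * (n choose (q - 1))"
    using assms(1) by simp
  finally have "C * binom_le n (q - 1) \<le> (n choose (q - 1)) * (C * q)"
    by (simp add: algebra_simps)
  also have "\<dots> \<le> n choose Suc (q - 1)"
    using assms by (intro choose_mult_le_choose_Suc) (auto simp: algebra_simps)
  finally show ?thesis using assms(1) by simp
qed

text \<open>Both the loss \<open>r * binom_le n (q - 1)\<close> in passing from \<open>binom_le n q\<close> to
  \<open>binom_le (n - r) q\<close> and the error term \<open>D * binom_le n (q - 1)\<close> are absorbed by
  \<open>n choose q\<close> once \<open>n\<close> is large.\<close>

lemma le_two_power_mult_binom_le_diff:
  assumes "0 < q" and "2 * q + (D + 2 ^ r * r) * q * q \<le> n"
    and "x \<le> D * binom_le n (q - 1) + (2 ^ r - 1) * binom_le n q"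
  shows "x \<le> 2 ^ r * binom_le (n - r) q"
proof -
  define b where "b = binom_le n (q - 1)"
  define c where "c = n choose q"
  obtain q' where q: "q = Suc q'" using assms(1) not0_implies_Suc by blast
  have bc: "b + c = binom_le n q"
    unfolding b_def c_def binom_le_def q by simp
  have pascal: "b + c \<le> binom_le (n - r) q + r * b"
  proof -
    have "binom_le n q \<le> binom_le (n - r) q + (n - (n - r)) * b"
      unfolding q b_def using binom_le_Suc_le[of "n - r" n q'] by simp
    moreover have "(n - (n - r)) * b \<le> r * b" by (intro mult_right_mono) simp_all
    ultimately show ?thesis using bc by linarith
  qed
  have small: "(D + 2 ^ r * r) * b \<le> c"
    unfolding b_def c_def by (rule binom_le_pred_le_choose[OF assms(1,2)])
  obtain P where P: "2 ^ r = Suc P" using not0_implies_Suc[of "2 ^ r"] by auto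
  have "x + (b + c) \<le> D * b + 2 ^ r * (b + c)"
    using assms(3) P bc unfolding b_def by simp
  also have "\<dots> \<le> D * b + 2 ^ r * (binom_le (n - r) q + r * b)"
    using pascal by simp
  also have "\<dots> = 2 ^ r * binom_le (n - r) q + (D + 2 ^ r * r) * b"
    by (simp add: algebra_simps)
  also have "\<dots> \<le> 2 ^ r * binom_le (n - r) q + (b + c)"
    using small by simp
  finally show ?thesis by simp
qed

section \<open>Families with small unions of \<open>k\<close> members\<close>

definition bounded_unions :: "nat \<Rightarrow> nat \<Rightarrow> 'a set set \<Rightarrow> bool" where
  "bounded_unions k d F \<longleftrightarrow> (\<forall>g. (\<forall>i<k. g i \<in> F) \<longrightarrow> card (\<Union>i<k. g i) \<le> d)"

lemma bounded_unionsD: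
  "bounded_unions k d F \<Longrightarrow> (\<And>i. i < k \<Longrightarrow> g i \<in> F) \<Longrightarrow> card (\<Union>i<k. g i) \<le> d"
  unfolding bounded_unions_def by blast

lemma bounded_unions_if_VC_le:
  assumes "down_closed B" and "0 < k" and "B \<subseteq> Pow {1..n}"
    and "\<And>Y. shatters (symdiff_pow B k) Y \<Longrightarrow> shatters F Y" and "VC n F \<le> d"
  shows "bounded_unions k d B"
  unfolding bounded_unions_def
proof (intro allI impI)
  fix g assume g: "\<forall>i<k. g i \<in> B"
  then have "(\<Union>i<k. g i) \<subseteq> {1..n}" using assms(3) by blast
  moreover have "shatters F (\<Union>i<k. g i)"
    using g by (intro assms(4) shatters_symdiff_pow_Union[OF assms(1,2)]) auto
  ultimately have "card (\<Union>i<k. g i) \<le> VC n F"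
    by (rule card_le_VC)
  with assms(5) show "card (\<Union>i<k. g i) \<le> d" by simp
qed

lemma card_Union_le_if_bounded_unions:
  assumes "down_closed G" and "finite (\<Union>G)" and "r < k" and "bounded_unions k r G"
  shows "card (\<Union>G) \<le> r"
proof (rule ccontr)
  assume "\<not> card (\<Union>G) \<le> r"
  then obtain V where V: "V \<subseteq> \<Union>G" "card V = Suc r" "finite V"
    by (metis not_less_eq_eq obtain_subset_with_card_n)
  obtain f where f: "bij_betw f {..<Suc r} V"
    using ex_bij_betw_nat_finite[OF V(3)] V(2) lessThan_atLeast0 by auto
  define g where "g i = {f (min i r)}" for i
  have "g i \<in> G" for i
  proof -
    have "f (min i r) \<in> V"
      using bij_betwE[OF f] by simp
    then have "f (min i r) \<in> \<Union>G"
      using V(1) by blast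
    then show ?thesis
      unfolding g_def using down_closedD[OF assms(1)] by blast
  qed
  then have "card (\<Union>i<k. g i) \<le> r"
    using bounded_unionsD[OF assms(4)] by blast
  moreover have "V \<subseteq> (\<Union>i<k. g i)"
  proof
    fix y assume "y \<in> V"
    then obtain j where "j < Suc r" "y = f j"
      using f by (metis bij_betw_imp_surj_on imageE lessThan_iff)
    then show "y \<in> (\<Union>i<k. g i)"
      unfolding g_def using assms(3) by (intro UN_I[of j]) auto
  qed
  then have "card V \<le> card (\<Union>i<k. g i)"
    by (intro card_mono) (auto simp: g_def)
  ultimately show False using V(2) by simp
qed

lemma card_le_two_power_if_bounded_unions:
  assumes "finite N" and "F \<subseteq> Pow N" and "down_closed F"
    and "bounded_unions k r F" and "r < k"
  shows "card F \<le> 2 ^ r"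
proof -
  have "\<Union>F \<subseteq> N" using assms(2) by blast
  then have fin: "finite (\<Union>F)" using assms(1) by (rule finite_subset)
  then have "card F \<le> 2 ^ card (\<Union>F)" by (intro card_le_two_power) auto
  also have "\<dots> \<le> 2 ^ r"
    using card_Union_le_if_bounded_unions[OF assms(3) fin assms(5,4)]
    by (intro power_increasing) auto
  finally show ?thesis .
qed

lemma card_disjoint_subfamily_bounded_unions:
  assumes "bounded_unions k d F" and "M \<subseteq> F" and "pairwise disjnt M"
    and "\<And>C. C \<in> M \<Longrightarrow> card C = p" and "0 < p" and "k \<le> card M"
  shows "k * p \<le> d"
proof (cases "k = 0")
  case False
  obtain M' where M': "M' \<subseteq> M" "card M' = k"
    using obtain_subset_with_card_n[OF assms(6)] by metis
  have fin: "finite M'" "\<And>C. C \<in> M' \<Longrightarrow> finite C"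
    using M' assms(4,5) False card_ge_0_finite by auto
  obtain f where f: "bij_betw f {..<k} M'"
    using ex_bij_betw_nat_finite[OF fin(1)] M'(2) lessThan_atLeast0 by auto
  have "card (\<Union>i<k. f i) \<le> d"
    using assms(1,2) M'(1) f by (intro bounded_unionsD) (auto dest: bij_betwE)
  moreover have "(\<Union>i<k. f i) = \<Union>M'"
    using f by (simp add: bij_betw_def)
  moreover have "card (\<Union>M') = k * p"
    using card_Union_disjoint[OF pairwise_subset[OF assms(3) M'(1)] fin(2)] M' assms(4)
    by (simp add: subset_iff)
  ultimately show ?thesis by simp
qed simp

lemma exists_cover:
  assumes "finite N" and "F \<subseteq> Pow N" and "down_closed F"
    and "bounded_unions k d F" and "d < k * Suc q"
  shows "\<exists>X\<subseteq>N. card X \<le> k * Suc q \<and> (\<forall>S\<in>F. card (S - X) \<le> q)"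
proof -
  define H where "H = {S\<in>F. card S = Suc q}"
  have "H \<subseteq> Pow N" using assms(2) by (auto simp: H_def)
  then have finH: "finite H" using assms(1) by (meson finite_Pow_iff finite_subset)
  have nonempty: "S \<noteq> {}" if "S \<in> H" for S
    using that by (auto simp: H_def)
  have few: "card M < k" if "M \<subseteq> H" and "pairwise disjnt M" for M
  proof (rule ccontr)
    assume "\<not> card M < k"
    then have "k * Suc q \<le> d"
      using card_disjoint_subfamily_bounded_unions[OF assms(4), of M "Suc q"] that
      unfolding H_def by auto
    with assms(5) show False by simp
  qed
  obtain M where M: "M \<subseteq> H" "card M < k" "\<forall>S\<in>H. S \<inter> \<Union>M \<noteq> {}"
    using exists_maximal_disjoint_subfamily[OF finH nonempty few] by blast
  have "card (\<Union>M) \<le> (\<Sum>C\<in>M. card C)" by (rule card_Union_le_sum_card)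
  also have "\<dots> = card M * Suc q" using M(1) by (simp add: H_def subset_iff)
  also have "\<dots> \<le> k * Suc q" using M(2) by (intro mult_right_mono) simp_all
  finally have "card (\<Union>M) \<le> k * Suc q" .
  moreover have "\<Union>M \<subseteq> N" using M(1) assms(2) by (auto simp: H_def)
  moreover have "card (S - \<Union>M) \<le> q" if "S \<in> F" for S
  proof (rule ccontr)
    assume "\<not> card (S - \<Union>M) \<le> q"
    then obtain C where C: "C \<subseteq> S - \<Union>M" "card C = Suc q"
      by (metis not_less_eq_eq obtain_subset_with_card_n)
    then have "C \<in> H"
      using down_closedD[OF assms(3) that] unfolding H_def by blast
    with M(3) C(1) show False by blast
  qed
  ultimately show ?thesis by blast
qed

definition link :: "'a set \<Rightarrow> 'a set set \<Rightarrow> 'a set \<Rightarrow> 'a set set" where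
  "link X F B = {C. C \<inter> X = {} \<and> B \<union> C \<in> F}"

definition rich :: "nat \<Rightarrow> nat \<Rightarrow> 'a set \<Rightarrow> 'a set set \<Rightarrow> 'a set \<Rightarrow> bool" where
  "rich K q X F B \<longleftrightarrow>
     (\<exists>M\<subseteq>link X F B. finite M \<and> K \<le> card M \<and> pairwise disjnt M \<and> (\<forall>C\<in>M. card C = q))"

lemma link_subset:
  assumes "F \<subseteq> Pow N" and "finite N" and "\<And>S. S \<in> F \<Longrightarrow> card (S - X) \<le> q"
  shows "link X F B \<subseteq> {C. C \<subseteq> N \<and> card C \<le> q}"
proof
  fix C assume "C \<in> link X F B"
  then have C: "C \<inter> X = {}" "B \<union> C \<in> F" by (auto simp: link_def)
  then have "C \<subseteq> (B \<union> C) - X" "B \<union> C \<subseteq> N" using assms(1) by blast+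
  moreover have "finite ((B \<union> C) - X)"
    using \<open>B \<union> C \<subseteq> N\<close> assms(2) by (meson finite_Diff finite_subset)
  ultimately have "card C \<le> q"
    using assms(3)[OF C(2)] card_mono[of "(B \<union> C) - X" C] by linarith
  then show "C \<in> {C. C \<subseteq> N \<and> card C \<le> q}" using \<open>C \<subseteq> (B \<union> C) - X\<close> \<open>B \<union> C \<subseteq> N\<close> by blast
qed

lemma card_link_le:
  assumes "F \<subseteq> Pow N" and "finite N" and "\<And>S. S \<in> F \<Longrightarrow> card (S - X) \<le> q"
  shows "card (link X F B) \<le> binom_le (card N) q"
proof -
  have "card (link X F B) \<le> card {C. C \<subseteq> N \<and> card C \<le> q}"
    using link_subset[OF assms] assms(2) by (intro card_mono) auto
  then show ?thesis using card_subsets_card_le[OF assms(2)] by simp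
qed

lemma link_antimono:
  assumes "down_closed F" and "B' \<subseteq> B"
  shows "link X F B \<subseteq> link X F B'"
proof
  fix C assume "C \<in> link X F B"
  then have "C \<inter> X = {}" "B \<union> C \<in> F" by (auto simp: link_def)
  moreover have "B' \<union> C \<subseteq> B \<union> C" using assms(2) by blast
  ultimately show "C \<in> link X F B'"
    using down_closedD[OF assms(1)] by (auto simp: link_def)
qed

lemma finite_if_mem_link:
  assumes "F \<subseteq> Pow N" and "finite N" and "C \<in> link X F B"
  shows "finite C"
proof -
  have "B \<union> C \<in> F" using assms(3) by (simp add: link_def)
  then have "C \<subseteq> N" using assms(1) by blast
  then show ?thesis using assms(2) by (rule finite_subset)
qed

lemma finite_link:
  assumes "finite F" and "B \<subseteq> X"
  shows "finite (link X F B)"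
proof -
  have "link X F B \<subseteq> (\<lambda>S. S - X) ` F"
  proof
    fix C assume "C \<in> link X F B"
    then have "C = (B \<union> C) - X" "B \<union> C \<in> F" using assms(2) by (auto simp: link_def)
    then show "C \<in> (\<lambda>S. S - X) ` F" by blast
  qed
  with assms(1) show ?thesis by (meson finite_imageI finite_subset)
qed

text \<open>A set is determined by its trace on \<open>X\<close> and the rest, which lies in the link of the trace.\<close>

lemma card_le_sum_card_link:
  assumes "finite F" and "finite X"
  shows "card F \<le> (\<Sum>B\<in>Pow X. card (link X F B))"
proof -
  have "inj_on (\<lambda>S. (S \<inter> X, S - X)) F"
    by (rule inj_onI) (metis Int_Diff_Un prod.inject)
  moreover have "(\<lambda>S. (S \<inter> X, S - X)) ` F \<subseteq> Sigma (Pow X) (link X F)"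
    by (auto simp: link_def Int_Diff_Un)
  moreover have fin: "\<forall>B\<in>Pow X. finite (link X F B)"
    using finite_link[OF assms(1)] by blast
  then have "finite (Sigma (Pow X) (link X F))"
    using assms(2) by (intro finite_SigmaI) auto
  ultimately have "card F \<le> card (Sigma (Pow X) (link X F))"
    using card_inj_on_le by blast
  also have "\<dots> = (\<Sum>B\<in>Pow X. card (link X F B))"
    using assms(2) fin by (intro card_SigmaI) auto
  finally show ?thesis .
qed

lemma rich_antimono:
  assumes "down_closed F" and "rich K q X F B" and "B' \<subseteq> B"
  shows "rich K q X F B'"
  using assms link_antimono[OF assms(1,3), of X] unfolding rich_def by (meson order_trans)

lemma down_closed_rich:
  assumes "down_closed F"
  shows "down_closed {B. B \<subseteq> X \<and> rich K q X F B}"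
  unfolding down_closed_def using rich_antimono[OF assms] by blast

lemma bounded_unions_rich:
  assumes "finite N" and "F \<subseteq> Pow N" and "bounded_unions k (k * q + r) F"
    and "\<And>S. S \<in> F \<Longrightarrow> card (S - X) \<le> q" and "k * q < K"
  shows "bounded_unions k r {B. B \<subseteq> X \<and> rich K q X F B}"
  unfolding bounded_unions_def
proof (intro allI impI)
  fix b assume "\<forall>i<k. b i \<in> {B. B \<subseteq> X \<and> rich K q X F B}"
  then have b: "\<And>i. i < k \<Longrightarrow> b i \<subseteq> X \<and> rich K q X F (b i)" by blast
  obtain M where M: "\<And>i. i < k \<Longrightarrow> M i \<subseteq> link X F (b i) \<and> finite (M i) \<and> K \<le> card (M i)
                       \<and> pairwise disjnt (M i) \<and> (\<forall>C\<in>M i. card C = q)"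
    using b unfolding rich_def by metis
  note fin_link = finite_if_mem_link[OF assms(2,1)]
  have "\<exists>c. (\<forall>i<k. c i \<in> M i \<and> c i \<inter> {} = {}) \<and> disjoint_family_on c {..<k}"
  proof (rule exists_disjoint_choice)
    fix i assume "i < k"
    then show "pairwise disjnt (M i)" and "card {} + k * q < card (M i)"
      using M[OF \<open>i < k\<close>] assms(5) by auto
    fix C assume "C \<in> M i"
    then show "finite C \<and> card C = q"
      using M[OF \<open>i < k\<close>] fin_link by blast
  qed simp
  then obtain c where c: "\<And>i. i < k \<Longrightarrow> c i \<in> M i" and disj: "disjoint_family_on c {..<k}"
    by blast
  have cl: "c i \<inter> X = {}" "b i \<union> c i \<in> F" if "i < k" for i
    using M[OF that] c[OF that] by (auto simp: link_def)
  have finc: "finite (c i) \<and> card (c i) = q" if "i < k" for i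
    using M[OF that] c[OF that] fin_link by blast
  have "(\<Union>i<k. b i) \<subseteq> N" using cl(2) assms(2) by blast
  then have finb: "finite (\<Union>i<k. b i)" using assms(1) by (rule finite_subset)
  have "(\<Union>i<k. b i) \<inter> (\<Union>i<k. c i) = {}" using b cl(1) by blast
  then have "card ((\<Union>i<k. b i) \<union> (\<Union>i<k. c i)) = card (\<Union>i<k. b i) + k * q"
    using card_Un_disjoint[OF finb] card_UN_disjoint_uniform[OF disj finc] finc
    by (simp add: finite_UN)
  moreover have "(\<Union>i<k. b i) \<union> (\<Union>i<k. c i) = (\<Union>i<k. b i \<union> c i)" by blast
  moreover have "card (\<Union>i<k. b i \<union> c i) \<le> k * q + r"
    by (rule bounded_unionsD[OF assms(3)]) (rule cl(2))
  ultimately show "card (\<Union>i<k. b i) \<le> r" by simp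
qed

lemma exists_disjoint_link_sets:
  assumes "finite N" and "F \<subseteq> Pow N" and "rich K q X F R"
    and "finite D" and "card D + m * q < K"
  shows "\<exists>c. (\<forall>i<m. c i \<in> link X F R \<and> c i \<inter> D = {} \<and> finite (c i) \<and> card (c i) = q)
             \<and> disjoint_family_on c {..<m}"
proof -
  obtain M where M: "M \<subseteq> link X F R" "K \<le> card M" "pairwise disjnt M" "\<forall>C\<in>M. card C = q"
    using assms(3) unfolding rich_def by blast
  have fin_M: "finite C" if "C \<in> M" for C
    using M(1) that by (intro finite_if_mem_link[OF assms(2,1)]) blast
  have "\<exists>c. (\<forall>i<m. c i \<in> M \<and> c i \<inter> D = {}) \<and> disjoint_family_on c {..<m}"
    using M(2,3,4) fin_M assms(5) by (intro exists_disjoint_choice[OF assms(4)]) auto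
  then show ?thesis using M(1,4) fin_M by blast
qed

lemma card_Un_Union_le_if_bounded_unions:
  assumes "bounded_unions k d F" and "finite N" and "F \<subseteq> Pow N" and "0 < k"
    and "D \<in> F" and "\<And>i. i < k - 1 \<Longrightarrow> R \<union> c i \<in> F" and "R = {} \<or> 1 < k"
  shows "card (D \<union> R \<union> (\<Union>i<k - 1. c i)) \<le> d"
proof -
  define g where "g i = (if i = 0 then D else R \<union> c (i - 1))" for i
  have gF: "g i \<in> F" if "i < k" for i
    using assms(5,6) that by (auto simp: g_def)
  have g: "g i \<subseteq> (\<Union>i<k. g i)" if "i < k" for i
    using that by (intro UN_upper) simp
  have "D \<subseteq> (\<Union>i<k. g i)"
    using g[of 0] assms(4) by (simp add: g_def)
  moreover have "c i \<subseteq> (\<Union>i<k. g i)" if "i < k - 1" for i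
    using g[of "Suc i"] that by (auto simp: g_def)
  moreover have "R \<subseteq> (\<Union>i<k. g i)"
    using g[of 1] assms(7) by (auto simp: g_def)
  ultimately have "D \<union> R \<union> (\<Union>i<k - 1. c i) \<subseteq> (\<Union>i<k. g i)" by blast
  moreover have "(\<Union>i<k. g i) \<subseteq> N" using gF assms(3) by blast
  then have "finite (\<Union>i<k. g i)" using assms(2) by (rule finite_subset)
  ultimately have "card (D \<union> R \<union> (\<Union>i<k - 1. c i)) \<le> card (\<Union>i<k. g i)"
    by (intro card_mono)
  also have "\<dots> \<le> d"
    using gF by (rule bounded_unionsD[OF assms(1)])
  finally show ?thesis .
qed

text \<open>If a trace \<open>R\<close> with \<open>card R = r\<close> is rich, a set \<open>S\<close> with more than \<open>q\<close> points outside \<open>R\<close>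
  contributes \<open>q + 1\<close> fresh points, and \<open>k - 1\<close> disjoint link sets of \<open>R\<close> avoiding them contribute
  \<open>(k - 1) * q\<close> more: \<open>k\<close> members with a union of \<open>k * q + r + 1\<close> points.\<close>

lemma card_diff_le_if_rich:
  assumes "finite N" and "F \<subseteq> Pow N" and "down_closed F"
    and "bounded_unions k (k * q + r) F" and "r < k"
    and "X \<subseteq> N" and "R \<subseteq> X" and "card R = r" and "rich K q X F R" and "k * q + 1 < K"
    and "S \<in> F"
  shows "card (S - R) \<le> q"
proof (rule ccontr)
  assume "\<not> card (S - R) \<le> q"
  then obtain D where D: "D \<subseteq> S - R" "card D = Suc q"
    by (metis not_less_eq_eq obtain_subset_with_card_n)
  have "D \<in> F" using down_closedD[OF assms(3,11)] D(1) by blast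
  have finD: "finite D" using D(2) by (simp add: card_ge_0_finite)
  have finR: "finite R" using assms(1,6,7) by (meson finite_subset)
  have "card D + (k - 1) * q < K" using D(2) assms(5,10) by (cases k) auto
  then obtain c where c: "\<And>i. i < k - 1 \<Longrightarrow>
      c i \<in> link X F R \<and> c i \<inter> D = {} \<and> finite (c i) \<and> card (c i) = q"
    and disj: "disjoint_family_on c {..<k - 1}"
    using exists_disjoint_link_sets[OF assms(1,2,9) finD] by blast
  have cl: "c i \<inter> X = {}" "R \<union> c i \<in> F" if "i < k - 1" for i
    using c[OF that] by (auto simp: link_def)
  define U where "U = (\<Union>i<k - 1. c i)"
  have cardU: "card U = (k - 1) * q"
    unfolding U_def using c by (intro card_UN_disjoint_uniform[OF disj]) auto
  have "R = {} \<or> 1 < k"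
  proof (cases "1 < k")
    case False
    then have "card R = 0" using assms(5,8) by simp
    then show ?thesis using finR by simp
  qed simp
  then have le: "card (D \<union> R \<union> U) \<le> k * q + r"
    unfolding U_def using assms(5) cl(2) \<open>D \<in> F\<close>
    by (intro card_Un_Union_le_if_bounded_unions[OF assms(4,1,2)]) auto
  have "finite U" unfolding U_def using c by blast
  have "D \<inter> R = {}" "(D \<union> R) \<inter> U = {}"
    using D(1) c cl(1) assms(7) unfolding U_def by blast+
  then have "card (D \<union> R \<union> U) = Suc q + r + (k - 1) * q"
    using card_Un_disjoint[OF finD finR] card_Un_disjoint[of "D \<union> R" U] finD finR \<open>finite U\<close>
      cardU D(2) assms(8) by simp
  also have "\<dots> = k * q + r + 1" using assms(5) by (cases k) auto
  finally show False using le by linarith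
qed

lemma card_le_if_card_diff_le:
  assumes "finite N" and "F \<subseteq> Pow N" and "R \<subseteq> N" and "\<And>S. S \<in> F \<Longrightarrow> card (S - R) \<le> q"
  shows "card F \<le> 2 ^ card R * binom_le (card N - card R) q"
proof -
  let ?T = "{C. C \<subseteq> N - R \<and> card C \<le> q}"
  have finR: "finite R" using assms(1,3) by (rule finite_subset[rotated])
  have finT: "finite ?T"
    by (rule finite_subset[of _ "Pow (N - R)"]) (use assms(1) in auto)
  have "F \<subseteq> (\<lambda>(B, C). B \<union> C) ` (Pow R \<times> ?T)"
  proof
    fix S assume "S \<in> F"
    then have "(S \<inter> R, S - R) \<in> Pow R \<times> ?T" using assms(2,4) by blast
    then show "S \<in> (\<lambda>(B, C). B \<union> C) ` (Pow R \<times> ?T)"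
      by (rule rev_image_eqI) (simp add: Int_Diff_Un)
  qed
  then have "card F \<le> card ((\<lambda>(B, C). B \<union> C) ` (Pow R \<times> ?T))"
    using finR finT by (intro card_mono) auto
  also have "\<dots> \<le> card (Pow R) * card ?T"
    using card_image_le[of "Pow R \<times> ?T"] finR finT by (simp add: card_cartesian_product)
  also have "\<dots> = 2 ^ card R * binom_le (card N - card R) q"
    using finR assms(1,3) by (simp add: card_Pow card_subsets_card_le card_Diff_subset)
  finally show ?thesis .
qed

lemma card_less_two_power:
  assumes "finite (\<Union>G)" and "card (\<Union>G) \<le> r" and "\<And>R. R \<in> G \<Longrightarrow> card R \<noteq> r"
  shows "card G < 2 ^ r"
proof (cases "card (\<Union>G) = r")
  case True
  then have "G \<subset> Pow (\<Union>G)" using assms(3) by blast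
  then have "card G < card (Pow (\<Union>G))"
    using assms(1) by (intro psubset_card_mono) auto
  then show ?thesis using True assms(1) by (simp add: card_Pow)
next
  case False
  then have "card G \<le> 2 ^ card (\<Union>G)"
    using assms(1) by (intro card_le_two_power) auto
  also have "\<dots> < 2 ^ r"
    using False assms(2) by (intro power_strict_increasing) auto
  finally show ?thesis .
qed

lemma card_link_le_if_not_rich:
  assumes "finite N" and "F \<subseteq> Pow N" and "\<And>S. S \<in> F \<Longrightarrow> card (S - X) \<le> q" and "0 < q"
    and "\<not> rich K q X F B"
  shows "card (link X F B) \<le> (1 + K * q) * binom_le (card N) (q - 1)"
proof -
  define H where "H = {C \<in> link X F B. card C = q}"
  have link: "link X F B \<subseteq> {C. C \<subseteq> N \<and> card C \<le> q}"
    by (rule link_subset[OF assms(2,1,3)])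
  have finLow: "finite {C. C \<subseteq> N \<and> card C \<le> q - 1}"
    by (rule finite_subset[of _ "Pow N"]) (use assms(1) in auto)
  have HN: "H \<subseteq> {S. S \<subseteq> N \<and> card S = q}" unfolding H_def using link by blast
  have finH: "finite H"
    by (rule finite_subset[OF HN], rule finite_subset[of _ "Pow N"]) (use assms(1) in auto)
  have few: "card M < K" if "M \<subseteq> H" and "pairwise disjnt M" for M
  proof (rule ccontr)
    assume "\<not> card M < K"
    then have "rich K q X F B"
      using that finite_subset[OF that(1) finH] unfolding rich_def H_def by auto
    with assms(5) show False ..
  qed
  have "link X F B \<subseteq> {C. C \<subseteq> N \<and> card C \<le> q - 1} \<union> H"
    using link unfolding H_def by fastforce
  then have "card (link X F B) \<le> card {C. C \<subseteq> N \<and> card C \<le> q - 1} + card H"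
    using finLow finH card_mono[of _ "link X F B"] card_Un_le by (meson finite_UnI le_trans)
  also have "\<dots> \<le> binom_le (card N) (q - 1) + K * q * (card N choose (q - 1))"
    using card_subsets_card_le[OF assms(1)] card_uniform_family_le[OF assms(1,4) HN few] by simp
  also have "\<dots> \<le> binom_le (card N) (q - 1) + K * q * binom_le (card N) (q - 1)"
    unfolding binom_le_def by (simp add: member_le_sum)
  finally show ?thesis by (simp add: algebra_simps)
qed

lemma card_le_if_few_rich_traces:
  assumes "finite N" and "F \<subseteq> Pow N" and "X \<subseteq> N" and "card X \<le> k * Suc q"
    and "\<And>S. S \<in> F \<Longrightarrow> card (S - X) \<le> q" and "0 < q"
    and "card {B. B \<subseteq> X \<and> rich K q X F B} < 2 ^ r"
  shows "card F \<le> 2 ^ (k * Suc q) * (1 + K * q) * binom_le (card N) (q - 1)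
                   + (2 ^ r - 1) * binom_le (card N) q"
proof -
  define G where "G = {B. B \<subseteq> X \<and> rich K q X F B}"
  have finF: "finite F" using assms(1,2) by (meson finite_Pow_iff finite_subset)
  have finX: "finite X" using assms(1,3) by (rule finite_subset[rotated])
  have rich_links: "(\<Sum>B\<in>G. card (link X F B)) \<le> (2 ^ r - 1) * binom_le (card N) q"
  proof -
    have "(\<Sum>B\<in>G. card (link X F B)) \<le> card G * binom_le (card N) q"
      using sum_bounded_above[of G "\<lambda>B. card (link X F B)"] card_link_le[OF assms(2,1,5)] by simp
    also have "\<dots> \<le> (2 ^ r - 1) * binom_le (card N) q"
      using assms(7) unfolding G_def by (intro mult_right_mono) auto
    finally show ?thesis .
  qed
  have poor_links: "(\<Sum>B\<in>Pow X - G. card (link X F B))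
                      \<le> 2 ^ (k * Suc q) * (1 + K * q) * binom_le (card N) (q - 1)"
  proof -
    have "card (link X F B) \<le> (1 + K * q) * binom_le (card N) (q - 1)" if "B \<in> Pow X - G" for B
      using that card_link_le_if_not_rich[OF assms(1,2,5,6)] unfolding G_def by blast
    then have "(\<Sum>B\<in>Pow X - G. card (link X F B))
                 \<le> card (Pow X - G) * ((1 + K * q) * binom_le (card N) (q - 1))"
      using sum_bounded_above[of "Pow X - G" "\<lambda>B. card (link X F B)"] by simp
    also have "\<dots> \<le> 2 ^ (k * Suc q) * ((1 + K * q) * binom_le (card N) (q - 1))"
    proof (rule mult_right_mono)
      have "card (Pow X - G) \<le> 2 ^ card X"
        using finX by (intro card_le_two_power) auto
      also have "\<dots> \<le> 2 ^ (k * Suc q)"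
        using assms(4) by (intro power_increasing) auto
      finally show "card (Pow X - G) \<le> 2 ^ (k * Suc q)" .
    qed simp
    finally show ?thesis by (simp only: mult.assoc)
  qed
  have "card F \<le> (\<Sum>B\<in>Pow X. card (link X F B))"
    by (rule card_le_sum_card_link[OF finF finX])
  also have "\<dots> = (\<Sum>B\<in>Pow X - G. card (link X F B)) + (\<Sum>B\<in>G. card (link X F B))"
    using finX by (intro sum.subset_diff) (auto simp: G_def)
  finally show ?thesis
    using rich_links poor_links by linarith
qed

text \<open>The threshold of \<open>le_two_power_mult_binom_le_diff\<close> for the constants of
  \<open>card_le_if_few_rich_traces\<close> with \<open>K = k * q + 2\<close>.\<close>

definition vc_threshold :: "nat \<Rightarrow> nat \<Rightarrow> nat \<Rightarrow> nat" where
  "vc_threshold k q r = 2 * q + (2 ^ (k * Suc q) * (1 + (k * q + 2) * q) + 2 ^ r * r) * q * q"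

lemma card_le_if_bounded_unions:
  assumes "finite N" and "F \<subseteq> Pow N" and "down_closed F"
    and "bounded_unions k (k * q + r) F" and "r < k" and "vc_threshold k q r \<le> card N"
  shows "card F \<le> 2 ^ r * binom_le (card N - r) q"
proof (cases "q = 0")
  case True
  then show ?thesis
    using card_le_two_power_if_bounded_unions[OF assms(1-3) _ assms(5)] assms(4)
    by (simp add: binom_le_def)
next
  case False
  then have q: "0 < q" by simp
  define K where "K = k * q + 2"
  obtain X where X: "X \<subseteq> N" "card X \<le> k * Suc q" "\<forall>S\<in>F. card (S - X) \<le> q"
    using exists_cover[OF assms(1-4), of q] assms(5) by auto
  define G where "G = {B. B \<subseteq> X \<and> rich K q X F B}"
  have "\<Union>G \<subseteq> N" using X(1) by (auto simp: G_def)
  then have "finite (\<Union>G)" using assms(1) by (rule finite_subset)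
  moreover have "bounded_unions k r G"
    unfolding G_def using X(3) by (intro bounded_unions_rich[OF assms(1,2,4)]) (auto simp: K_def)
  ultimately have "card (\<Union>G) \<le> r"
    using card_Union_le_if_bounded_unions down_closed_rich[OF assms(3)] assms(5) unfolding G_def by blast
  show ?thesis
  proof (cases "\<exists>R\<in>G. card R = r")
    case True
    then obtain R where R: "R \<subseteq> X" "rich K q X F R" "card R = r" by (auto simp: G_def)
    then have "card (S - R) \<le> q" if "S \<in> F" for S
      using card_diff_le_if_rich[OF assms(1-5) X(1) R(1,3,2) _ that] by (simp add: K_def)
    then show ?thesis
      using card_le_if_card_diff_le[OF assms(1,2)] R X(1) by fastforce
  next
    case False
    then have "card G < 2 ^ r"
      using card_less_two_power \<open>finite (\<Union>G)\<close> \<open>card (\<Union>G) \<le> r\<close> by blast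
    then have "card F \<le> 2 ^ (k * Suc q) * (1 + K * q) * binom_le (card N) (q - 1)
                          + (2 ^ r - 1) * binom_le (card N) q"
      using card_le_if_few_rich_traces[OF assms(1,2) X(1,2) _ q] X(3) unfolding G_def by blast
    moreover have "2 * q + (2 ^ (k * Suc q) * (1 + K * q) + 2 ^ r * r) * q * q \<le> card N"
      using assms(6) by (simp add: vc_threshold_def K_def)
    ultimately show ?thesis
      using le_two_power_mult_binom_le_diff[OF q] by blast
  qed
qed

theorem theorem3:
  fixes k d r :: nat
  assumes "k > 0" and "d > 0" and "r < k" and "d mod k = r"
  shows "\<exists>n0::nat. \<forall>n \<ge> n0. \<forall>A. A \<subseteq> Pow {1..n} \<longrightarrow>
           VC n (symdiff_pow A k) \<le> d \<longrightarrow>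
           card A \<le> 2 ^ r * binom_le (n - r) (d div k)"
proof -
  define q where "q = d div k"
  have d: "d = k * q + r"
    using assms(4) div_mult_mod_eq[of d k] unfolding q_def by (simp add: mult.commute)
  show ?thesis
  proof (intro exI[of _ "vc_threshold k q r"] allI impI)
    fix n A assume n: "vc_threshold k q r \<le> n" and A: "A \<subseteq> Pow {1..n}"
      and vc: "VC n (symdiff_pow A k) \<le> d"
    obtain B where B: "B \<subseteq> Pow {1..n}" "card B = card A" "down_closed B"
      "\<forall>Y. shatters (symdiff_pow B k) Y \<longrightarrow> shatters (symdiff_pow A k) Y"
      using exists_down_closed_family[OF A _ assms(1)] by auto
    have "bounded_unions k d B"
      using B(4) vc by (intro bounded_unions_if_VC_le[OF B(3) assms(1) B(1)]) auto
    then have "card B \<le> 2 ^ r * binom_le (n - r) q"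
      using card_le_if_bounded_unions[OF _ B(1,3) _ assms(3)] d n by simp
    then show "card A \<le> 2 ^ r * binom_le (n - r) (d div k)"
      using B(2) by (simp add: q_def)
  qed
qed

end
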